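(* Let $p,q\in\mathbb{N}$, $a\in\{1,\dots,p\}$, $b\in\{1,\dots,q\}$ and $n\in\mathbb{N}_0$. Set \[ \mathscr N_{p,q,a,b}(n)\coloneq\frac{n+1-\bigl(\frac{2-a}{p}+\frac{2-b}{q}\bigr)}{\frac1p+\frac1q},\qquad d_{b,a}(N)\coloneq\left\lceil\frac{N+2-a}{p}\right\rceil+\left\lceil\frac{N+2-b}{q}\right\rceil-1 . \] (1) For every $N\in\mathbb{N}_0$ with $N\ge\mathscr N_{p,q,a,b}(n)$ one has $n\le d_{b,a}(N)$. (2) Consequently, let $T$ be a semi-infinite complex matrix with $T_{i,j}=0$ whenever $j<i-p$ or $j>i+q$, let $\nu\in\mathbb{C}^{p\times p}$, $\xi\in\mathbb{C}^{q\times q}$ be invertible lower triangular matrices, and let $u_a^\nu,u_b^\xi,e_a^\nu,e_b^\xi$ be as described in the context. Defining $m_{n,a,b}\coloneq u_b^\xi\,T^n\,u_a^\nu$, one has \[ (e_b^\xi)^\top\bigl(T^{[N]}\bigr)^n e_a^\nu=m_{n,a,b}\quad\text{for all } N\in\mathbb{N}_0 \text{ with } N\ge\mathscr N_{p,q,a,b}(n), \] so that $(e_b^\xi)^\top(T^{[N]})^n e_a^\nu$ is independent of $N$ for $N\ge\mathscr N_{p,q,a,b}(n)$.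
   Context: $T^{[N]}=(T_{i,j})_{0\le i,j\le N}$ is the principal truncation of size $N+1$. $u_a^\nu$ is the semi-infinite column vector whose entries with indices $0,\dots,p-1$ are those of $\nu^{-\top}e_a^{[p]}$ and whose other entries are $0$; $u_b^\xi$ is the semi-infinite row vector whose entries with indices $0,\dots,q-1$ are those of $(e_b^{[q]})^\top\xi^{-1}$ and whose other entries are $0$ ($e_a^{[p]}$, $e_b^{[q]}$ standard basis vectors). $e_a^\nu,e_b^\xi\in\mathbb{C}^{N+1}$ are the vectors of entries with indices $0,\dots,N$ of $u_a^\nu$ and $(u_b^\xi)^\top$. Powers of the banded semi-infinite matrix $T$ are ordinary matrix products (finite sums), with $T^0=I$. *)

theory Defs
  imports "HOL-Analysis.Analysis" "Jordan_Normal_Form.Matrix"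
begin

text \<open>Semi-infinite complex matrices are functions nat => nat => complex (indices from 0).\<close>

definition banded :: "nat \<Rightarrow> nat \<Rightarrow> (nat \<Rightarrow> nat \<Rightarrow> complex) \<Rightarrow> bool" where
  "banded p q T \<longleftrightarrow> (\<forall>i j. (j + p < i \<or> j > i + q) \<longrightarrow> T i j = 0)"

text \<open>Product of semi-infinite matrices (for banded matrices the sum is finite).\<close>
definition smat_mult :: "(nat \<Rightarrow> nat \<Rightarrow> complex) \<Rightarrow> (nat \<Rightarrow> nat \<Rightarrow> complex) \<Rightarrow> nat \<Rightarrow> nat \<Rightarrow> complex" where
  "smat_mult A B = (\<lambda>i j. \<Sum>\<^sub>\<infinity>l. A i l * B l j)"

primrec smat_pow :: "(nat \<Rightarrow> nat \<Rightarrow> complex) \<Rightarrow> nat \<Rightarrow> nat \<Rightarrow> nat \<Rightarrow> complex" where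
  "smat_pow T 0 = (\<lambda>i j. if i = j then 1 else 0)"
| "smat_pow T (Suc k) = smat_mult (smat_pow T k) T"

definition trunc :: "(nat \<Rightarrow> nat \<Rightarrow> complex) \<Rightarrow> nat \<Rightarrow> complex mat" where
  "trunc T N = mat (N + 1) (N + 1) (\<lambda>(i, j). T i j)"

definition lower_triangular_mat :: "'a::zero mat \<Rightarrow> bool" where
  "lower_triangular_mat A \<longleftrightarrow> (\<forall>i j. i < j \<longrightarrow> j < dim_col A \<longrightarrow> i < dim_row A \<longrightarrow> A $$ (i, j) = 0)"

definition the_inverse_mat :: "complex mat \<Rightarrow> complex mat" where
  "the_inverse_mat A = (SOME B. B \<in> carrier_mat (dim_row A) (dim_row A) \<and> inverts_mat A B \<and> inverts_mat B A)"

text \<open>u_a^nu: entries 0..p-1 are those of nu^{-T} e_a (a in 1..p, 1-based), zero elsewhere.\<close>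
definition u_col :: "nat \<Rightarrow> complex mat \<Rightarrow> nat \<Rightarrow> nat \<Rightarrow> complex" where
  "u_col p \<nu> a i = (if i < p then (transpose_mat (the_inverse_mat \<nu>) *\<^sub>v unit_vec p (a - 1)) $ i else 0)"

text \<open>u_b^xi: entries 0..q-1 are those of e_b^T xi^{-1} (b in 1..q, 1-based), zero elsewhere.\<close>
definition u_row :: "nat \<Rightarrow> complex mat \<Rightarrow> nat \<Rightarrow> nat \<Rightarrow> complex" where
  "u_row q \<xi> b j = (if j < q then the_inverse_mat \<xi> $$ (b - 1, j) else 0)"

text \<open>m_{n,a,b} = u_b^xi T^n u_a^nu (finite sums since u vectors have finite support).\<close>
definition moment :: "nat \<Rightarrow> nat \<Rightarrow> (nat \<Rightarrow> nat \<Rightarrow> complex) \<Rightarrow> complex mat \<Rightarrow> complex mat \<Rightarrow> nat \<Rightarrow> nat \<Rightarrow> nat \<Rightarrow> complex" where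
  "moment p q T \<nu> \<xi> n a b = (\<Sum>i<q. \<Sum>j<p. u_row q \<xi> b i * smat_pow T n i j * u_col p \<nu> a j)"

definition Nscr :: "nat \<Rightarrow> nat \<Rightarrow> nat \<Rightarrow> nat \<Rightarrow> nat \<Rightarrow> real" where
  "Nscr p q a b n = (real n + 1 - ((2 - real a) / real p + (2 - real b) / real q)) / (1 / real p + 1 / real q)"

definition dba :: "nat \<Rightarrow> nat \<Rightarrow> nat \<Rightarrow> nat \<Rightarrow> nat \<Rightarrow> int" where
  "dba p q b a N = \<lceil>(real N + 2 - real a) / real p\<rceil> + \<lceil>(real N + 2 - real b) / real q\<rceil> - 1"

end

(*
  Entry (i, j) of T^n is a sum over paths i = k_0, ..., k_n = j with T_{k_{s-1} k_s} \<noteq> 0;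
  bandedness gives k_t \<le> min (i + q t) (j + p (n - t)), so the truncation T^[N] loses no
  path as soon as one of these two bounds is at most N for every t.  Since \<nu> and \<xi> are
  lower triangular, so are their inverses, hence u_a^\<nu> and u_b^\<xi> are supported on the
  indices below a and below b.  Cleared of denominators, N \<ge> N_{p,q,a,b}(n) reads
  p q (n + 1) + q a + p b \<le> (N + 2)(p + q), which excludes that both bounds exceed N
  for some t, and also yields n \<le> d_{b,a}(N) by rounding up.
*)
theory Submission
  imports Defs "Jordan_Normal_Form.Determinant"
begin

lemma smat_mult_eq_sum_lessThan:
  assumes "\<And>k. K \<le> k \<Longrightarrow> A i k * B k j = 0"
  shows "smat_mult A B i j = (\<Sum>k<K. A i k * B k j)"
proof -
  have "smat_mult A B i j = (\<Sum>\<^sub>\<infinity>k\<in>{..<K}. A i k * B k j)"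
    unfolding smat_mult_def by (rule infsum_cong_neutral) (use assms in auto)
  then show ?thesis by simp
qed

lemma banded_nonzeroD:
  assumes "banded p q T" "T k j \<noteq> 0"
  shows "k \<le> j + p" "j \<le> k + q"
  using assms unfolding banded_def by (meson not_le)+

lemma smat_pow_banded_eq_0:
  assumes "banded p q T" "i + q * n < j \<or> j + p * n < i"
  shows "smat_pow T n i j = 0"
  using assms(2)
proof (induction n arbitrary: j)
  case (Suc n)
  have "smat_pow T n i k * T k j = 0" for k
    using Suc banded_nonzeroD[OF assms(1), of k j] by fastforce
  then show ?case using smat_mult_eq_sum_lessThan[where K = 0] by simp
qed auto

lemma index_trunc_pow_mat:
  assumes "banded p q T" "i \<le> N" "j \<le> N"
    and "\<And>t. t \<le> n \<Longrightarrow> i + q * t \<le> N \<or> j + p * (n - t) \<le> N"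
  shows "(trunc T N ^\<^sub>m n) $$ (i, j) = smat_pow T n i j"
  using assms(3,4)
proof (induction n arbitrary: j)
  case 0
  then show ?case using assms(2) by (simp add: trunc_def)
next
  case (Suc n)
  have pow_carrier: "trunc T N ^\<^sub>m n \<in> carrier_mat (N + 1) (N + 1)"
    by (simp add: trunc_def)
  have entry: "(trunc T N ^\<^sub>m n) $$ (i, k) * T k j = smat_pow T n i k * T k j" if "k \<le> N" for k
  proof (cases "T k j = 0")
    case False
    with banded_nonzeroD[OF assms(1)] have "k + p * (n - t) \<le> j + p * (Suc n - t)" if "t \<le> n" for t
      using that by (simp add: Suc_diff_le)
    with Suc.prems(2) have "i + q * t \<le> N \<or> k + p * (n - t) \<le> N" if "t \<le> n" for t
      using that by (meson le_SucI order_trans)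
    then show ?thesis using Suc.IH[of k] \<open>k \<le> N\<close> by simp
  qed simp
  have outside: "smat_pow T n i k * T k j = 0" if "N + 1 \<le> k" for k
  proof (cases "T k j = 0")
    case False
    with banded_nonzeroD[OF assms(1)] Suc.prems(2)[of n] that have "i + q * n < k" by fastforce
    then show ?thesis using smat_pow_banded_eq_0[OF assms(1)] by simp
  qed simp
  have "(trunc T N ^\<^sub>m Suc n) $$ (i, j) = (\<Sum>k<N + 1. (trunc T N ^\<^sub>m n) $$ (i, k) * T k j)"
    using pow_carrier assms(2) Suc.prems(1)
    by (auto simp: scalar_prod_def trunc_def lessThan_atLeast0 intro!: sum.cong)
  also have "\<dots> = (\<Sum>k<N + 1. smat_pow T n i k * T k j)"
    using entry by (intro sum.cong) auto
  also have "\<dots> = smat_pow T (Suc n) i j"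
    unfolding smat_pow.simps by (rule smat_mult_eq_sum_lessThan[symmetric]) (use outside in simp)
  finally show ?case .
qed

lemma the_inverse_mat:
  assumes A: "A \<in> carrier_mat m m" and "invertible_mat A"
  shows "the_inverse_mat A \<in> carrier_mat m m" "A * the_inverse_mat A = 1\<^sub>m m"
proof -
  obtain B where B: "inverts_mat A B" "inverts_mat B A"
    using \<open>invertible_mat A\<close> unfolding invertible_mat_def by blast
  have "B \<in> carrier_mat m m"
    using arg_cong[OF B(1)[unfolded inverts_mat_def], of dim_col]
      arg_cong[OF B(2)[unfolded inverts_mat_def], of dim_col] A by auto
  then have "\<exists>B. B \<in> carrier_mat (dim_row A) (dim_row A) \<and> inverts_mat A B \<and> inverts_mat B A"
    using A B by auto
  from someI_ex[OF this] A
  show "the_inverse_mat A \<in> carrier_mat m m" "A * the_inverse_mat A = 1\<^sub>m m"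
    unfolding the_inverse_mat_def inverts_mat_def by auto
qed

lemma lower_triangular_right_inverse_diag_neq_0:
  fixes A B :: "'a::idom mat"
  assumes A: "A \<in> carrier_mat m m" and B: "B \<in> carrier_mat m m"
    and "lower_triangular_mat A" "A * B = 1\<^sub>m m" "i < m"
  shows "A $$ (i, i) \<noteq> 0"
proof -
  have "det A = prod_list (diag_mat A)"
    using det_lower_triangular[OF _ A] assms(3) A by (auto simp: lower_triangular_mat_def)
  moreover have "det A * det B = 1"
    using det_mult[OF A B] \<open>A * B = 1\<^sub>m m\<close> by simp
  ultimately have "prod_list (diag_mat A) \<noteq> 0"
    by (metis mult_zero_left zero_neq_one)
  then show ?thesis
    using A \<open>i < m\<close> by (auto simp: diag_mat_def prod_list_zero_iff)
qed

lemma lower_triangular_right_inverse: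
  fixes A B :: "'a::idom mat"
  assumes A: "A \<in> carrier_mat m m" and B: "B \<in> carrier_mat m m"
    and lower: "lower_triangular_mat A" and inverse: "A * B = 1\<^sub>m m"
  shows "lower_triangular_mat B"
proof -
  have "B $$ (i, j) = 0" if "i < j" "j < m" for i j
    using that
  proof (induction i rule: less_induct)
    case (less i)
    have vanish: "A $$ (i, k) * B $$ (k, j) = 0" if "k < m" "k \<noteq> i" for k
    proof (cases "k < i")
      case True
      then show ?thesis using less.IH[of k] less.prems by simp
    next
      case False
      then show ?thesis
        using that A less.prems lower unfolding lower_triangular_mat_def by auto
    qed
    have "0 = (A * B) $$ (i, j)"
      using inverse less.prems by simp
    also have "\<dots> = (\<Sum>k<m. A $$ (i, k) * B $$ (k, j))"
      using A B less.prems by (simp add: scalar_prod_def lessThan_atLeast0)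
    also have "\<dots> = A $$ (i, i) * B $$ (i, j)"
      using less.prems by (subst sum.remove[of _ i]) (simp_all add: vanish)
    finally show ?case
      using lower_triangular_right_inverse_diag_neq_0[OF A B lower inverse, of i] less.prems
      by simp
  qed
  then show ?thesis
    using B unfolding lower_triangular_mat_def by auto
qed

lemma the_inverse_mat_lower_triangular:
  assumes "A \<in> carrier_mat m m" "invertible_mat A" "lower_triangular_mat A"
  shows "lower_triangular_mat (the_inverse_mat A)"
  using lower_triangular_right_inverse the_inverse_mat assms by blast

lemma u_col_nonzero_imp_less:
  assumes "\<nu> \<in> carrier_mat p p" "invertible_mat \<nu>" "lower_triangular_mat \<nu>" "a \<in> {1..p}"
    and "u_col p \<nu> a i \<noteq> 0"
  shows "i < a"
proof (rule ccontr)
  assume "\<not> i < a"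
  have inv: "the_inverse_mat \<nu> \<in> carrier_mat p p" "lower_triangular_mat (the_inverse_mat \<nu>)"
    using the_inverse_mat the_inverse_mat_lower_triangular assms(1-3) by blast+
  have "i < p"
    using assms(5) unfolding u_col_def by (auto split: if_splits)
  then have "u_col p \<nu> a i = the_inverse_mat \<nu> $$ (a - 1, i)"
    using inv(1) assms(4) by (auto simp: u_col_def mult_mat_vec_def)
  also have "\<dots> = 0"
    using inv \<open>\<not> i < a\<close> \<open>i < p\<close> assms(4) unfolding lower_triangular_mat_def by auto
  finally show False using assms(5) by contradiction
qed

lemma u_row_nonzero_imp_less:
  assumes "\<xi> \<in> carrier_mat q q" "invertible_mat \<xi>" "lower_triangular_mat \<xi>" "b \<in> {1..q}"
    and "u_row q \<xi> b j \<noteq> 0"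
  shows "j < b"
proof (rule ccontr)
  assume "\<not> j < b"
  have inv: "the_inverse_mat \<xi> \<in> carrier_mat q q" "lower_triangular_mat (the_inverse_mat \<xi>)"
    using the_inverse_mat the_inverse_mat_lower_triangular assms(1-3) by blast+
  have "j < q"
    using assms(5) unfolding u_row_def by (auto split: if_splits)
  then have "u_row q \<xi> b j = 0"
    using inv \<open>\<not> j < b\<close> assms(4) unfolding u_row_def lower_triangular_mat_def by auto
  then show False using assms(5) by contradiction
qed

lemma sum_rectangle_eq_sum_rectangle:
  fixes f :: "nat \<Rightarrow> nat \<Rightarrow> 'a::comm_monoid_add"
  assumes "\<And>i j. f i j \<noteq> 0 \<Longrightarrow> i < min m m' \<and> j < min n n'"
  shows "(\<Sum>i<m. \<Sum>j<n. f i j) = (\<Sum>i<m'. \<Sum>j<n'. f i j)"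
  unfolding sum.cartesian_product
  by (rule sum.mono_neutral_cong) (use assms in fastforce)+

lemma trunc_pow_bilinear_eq_sum:
  assumes "banded p q T"
    and u: "\<And>i. u i \<noteq> 0 \<Longrightarrow> i < r" and v: "\<And>j. v j \<noteq> 0 \<Longrightarrow> j < s"
    and window: "\<And>t. t \<le> n \<Longrightarrow> r + q * t \<le> N + 1 \<or> s + p * (n - t) \<le> N + 1"
  shows "vec (N + 1) u \<bullet> ((trunc T N ^\<^sub>m n) *\<^sub>v vec (N + 1) v)
    = (\<Sum>i<r. \<Sum>j<s. u i * smat_pow T n i j * v j)"
proof -
  define M where "M = trunc T N ^\<^sub>m n"
  have M: "M \<in> carrier_mat (N + 1) (N + 1)"
    by (simp add: M_def trunc_def)
  have entry: "u i * ((trunc T N ^\<^sub>m n) $$ (i, j) * v j) = u i * smat_pow T n i j * v j"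
    if "i \<le> N" "j \<le> N" for i j
  proof (cases "u i = 0 \<or> v j = 0")
    case False
    then have "i < r" "j < s" using u v by auto
    with window have "i + q * t \<le> N \<or> j + p * (n - t) \<le> N" if "t \<le> n" for t
      using that by fastforce
    then show ?thesis
      using index_trunc_pow_mat[OF assms(1) \<open>i \<le> N\<close> \<open>j \<le> N\<close>] by simp
  qed auto
  have support: "i < min r (N + 1) \<and> j < min s (N + 1)"
    if "u i * smat_pow T n i j * v j \<noteq> 0" for i j
  proof -
    have "i < r" "j < s" "smat_pow T n i j \<noteq> 0" using that u v by auto
    moreover have "\<not> (i + q * n < j \<or> j + p * n < i)"
      using smat_pow_banded_eq_0[OF assms(1)] \<open>smat_pow T n i j \<noteq> 0\<close> by blast
    ultimately show ?thesis using window[of 0] window[of n] by auto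
  qed
  have "vec (N + 1) u \<bullet> (M *\<^sub>v vec (N + 1) v)
      = (\<Sum>i<N + 1. u i * (\<Sum>j<N + 1. M $$ (i, j) * v j))"
    using M by (simp add: scalar_prod_def mult_mat_vec_def lessThan_atLeast0)
  also have "\<dots> = (\<Sum>i<N + 1. \<Sum>j<N + 1. u i * smat_pow T n i j * v j)"
    unfolding sum_distrib_left M_def using entry by (intro sum.cong) auto
  also have "\<dots> = (\<Sum>i<r. \<Sum>j<s. u i * smat_pow T n i j * v j)"
    using support by (intro sum_rectangle_eq_sum_rectangle) auto
  finally show ?thesis unfolding M_def .
qed

lemma Nscr_le_iff:
  assumes "p > 0" "q > 0"
  shows "Nscr p q a b n \<le> real N \<longleftrightarrow> p * q * (n + 1) + q * a + p * b \<le> (N + 2) * (p + q)"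
proof -
  have pq: "real p * real q > 0" and denom: "1 / real p + 1 / real q > 0"
    using assms by (simp_all add: add_pos_pos)
  have "Nscr p q a b n \<le> real N
      \<longleftrightarrow> real n + 1 - ((2 - real a) / p + (2 - real b) / q) \<le> real N * (1 / p + 1 / q)"
    unfolding Nscr_def by (rule pos_divide_le_eq[OF denom])
  also have "\<dots> \<longleftrightarrow> real p * q * (real n + 1 - ((2 - real a) / p + (2 - real b) / q))
      \<le> real p * q * (real N * (1 / p + 1 / q))"
    by (rule mult_le_cancel_left_pos[OF pq, symmetric])
  also have "\<dots> \<longleftrightarrow> real p * q * (n + 1) - q * (2 - real a) - p * (2 - real b) \<le> N * (real p + q)"
  proof -
    have "real p * q * (real n + 1 - ((2 - real a) / p + (2 - real b) / q))
        = real p * q * (n + 1) - q * (2 - real a) - p * (2 - real b)"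
      "real p * q * (real N * (1 / p + 1 / q)) = N * (real p + q)"
      using assms by (simp_all add: field_simps)
    then show ?thesis by (simp only:)
  qed
  also have "\<dots> \<longleftrightarrow> real (p * q * (n + 1) + q * a + p * b) \<le> real ((N + 2) * (p + q))"
    by (simp add: algebra_simps)
  finally show ?thesis by (simp only: of_nat_le_iff)
qed

lemma le_dba:
  assumes "p > 0" "q > 0" "p * q * (n + 1) + q * a + p * b \<le> (N + 2) * (p + q)"
  shows "int n \<le> dba p q b a N"
proof -
  have "real (p * q * (n + 1) + q * a + p * b) \<le> real ((N + 2) * (p + q))"
    using assms(3) by (simp only: of_nat_le_iff)
  then have "real n \<le> (real N + 2 - real a) / real p + (real N + 2 - real b) / real q - 1"
    using assms(1,2) by (simp add: field_simps)
  also have "\<dots> \<le> dba p q b a N"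
    unfolding dba_def using le_of_int_ceiling by (simp add: add_mono)
  finally show ?thesis by linarith
qed

lemma window_split_of_le:
  fixes p q a b n N t :: nat
  assumes "p > 0" "q > 0" "p * q * (n + 1) + q * a + p * b \<le> (N + 2) * (p + q)" "t \<le> n"
  shows "b + q * t \<le> N + 1 \<or> a + p * (n - t) \<le> N + 1"
proof (rule ccontr)
  assume "\<not> ?thesis"
  then have "N + 2 \<le> b + q * t" "N + 2 \<le> a + p * (n - t)"
    by simp_all
  then have "p * (N + 2) \<le> p * (b + q * t)" "q * (N + 2) \<le> q * (a + p * (n - t))"
    by (meson mult_le_mono2)+
  moreover have "p * q * t + p * q * (n - t) = p * q * n"
    using assms(4) by (metis add_mult_distrib2 le_add_diff_inverse)
  ultimately have "(N + 2) * (p + q) \<le> p * q * n + q * a + p * b"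
    by (simp add: algebra_simps)
  moreover have "p * q * (n + 1) = p * q * n + p * q" "p * q > 0"
    using assms(1,2) by simp_all
  ultimately show False
    using assms(3) by linarith
qed

theorem lemma2:
  fixes p q a b n :: nat
    and T :: "nat \<Rightarrow> nat \<Rightarrow> complex"
    and \<nu> \<xi> :: "complex mat"
  assumes "p \<ge> 1" and "q \<ge> 1"
    and "a \<in> {1..p}" and "b \<in> {1..q}"
    and "banded p q T"
    and "\<nu> \<in> carrier_mat p p" and "invertible_mat \<nu>" and "lower_triangular_mat \<nu>"
    and "\<xi> \<in> carrier_mat q q" and "invertible_mat \<xi>" and "lower_triangular_mat \<xi>"
  shows "(\<forall>N::nat. real N \<ge> Nscr p q a b n \<longrightarrow> int n \<le> dba p q b a N)
       \<and> (\<forall>N::nat. real N \<ge> Nscr p q a b n \<longrightarrow>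
            vec (N + 1) (u_row q \<xi> b) \<bullet> ((trunc T N ^\<^sub>m n) *\<^sub>v vec (N + 1) (u_col p \<nu> a))
              = moment p q T \<nu> \<xi> n a b)"
proof -
  have pos: "p > 0" "q > 0"
    using assms(1,2) by simp_all
  have "int n \<le> dba p q b a N" if "real N \<ge> Nscr p q a b n" for N
    using le_dba[OF pos] Nscr_le_iff[OF pos] that by blast
  moreover have "vec (N + 1) (u_row q \<xi> b) \<bullet> ((trunc T N ^\<^sub>m n) *\<^sub>v vec (N + 1) (u_col p \<nu> a))
      = moment p q T \<nu> \<xi> n a b" if "real N \<ge> Nscr p q a b n" for N
  proof -
    note u = u_row_nonzero_imp_less[OF assms(9-11,4)]
    note v = u_col_nonzero_imp_less[OF assms(6-8,3)]
    have window: "b + q * t \<le> N + 1 \<or> a + p * (n - t) \<le> N + 1" if "t \<le> n" for t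
      using window_split_of_le[OF pos] Nscr_le_iff[OF pos] \<open>real N \<ge> Nscr p q a b n\<close> that by blast
    have "vec (N + 1) (u_row q \<xi> b) \<bullet> ((trunc T N ^\<^sub>m n) *\<^sub>v vec (N + 1) (u_col p \<nu> a))
        = (\<Sum>i<b. \<Sum>j<a. u_row q \<xi> b i * smat_pow T n i j * u_col p \<nu> a j)"
      using u v window by (rule trunc_pow_bilinear_eq_sum[OF assms(5)])
    also have "\<dots> = moment p q T \<nu> \<xi> n a b"
      unfolding moment_def using u v assms(3,4) by (intro sum_rectangle_eq_sum_rectangle) force
    finally show ?thesis .
  qed
  ultimately show ?thesis by blast
qed

end
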